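(* Let $G$ be a graph that has an EPG-representation in a grid with $h$ rows in which every grid-edge is used by at most $c$ vertex-paths. Then the pathwidth of $G$ satisfies $pw(G)\le c(3h-1)-1$.
   Context: The $w\times h$-grid consists of all grid-points $(i,j)$ with integer coordinates $1\le i\le w$, $1\le j\le h$ (so it has $h$ rows), and all grid-edges joining grid-points at distance $1$. An EPG-representation of a graph $G$ assigns to each vertex $v$ a path $\mathrm{path}(v)$ in the grid such that $(v,w)$ is an edge of $G$ if and only if $\mathrm{path}(v)$ and $\mathrm{path}(w)$ share a grid-edge. The pathwidth $pw(G)$ is the smallest $k$ such that $G$ is a subgraph of a $(k+1)$-colourable interval graph (an interval graph is the intersection graph of a family of closed intervals of the real line). *)

theory Defs
  imports Complex_Main
begin

definition graph :: "'a set \<Rightarrow> 'a set set \<Rightarrow> bool" where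
  "graph V E \<longleftrightarrow> finite V \<and> (\<forall>e\<in>E. \<exists>u v. e = {u, v} \<and> u \<noteq> v \<and> u \<in> V \<and> v \<in> V)"

definition grid_point :: "nat \<Rightarrow> nat \<Rightarrow> nat \<times> nat \<Rightarrow> bool" where
  "grid_point w h p \<longleftrightarrow> 1 \<le> fst p \<and> fst p \<le> w \<and> 1 \<le> snd p \<and> snd p \<le> h"

definition grid_adj :: "nat \<times> nat \<Rightarrow> nat \<times> nat \<Rightarrow> bool" where
  "grid_adj p q \<longleftrightarrow>
     (fst p = fst q \<and> (snd p = snd q + 1 \<or> snd q = snd p + 1)) \<or>
     (snd p = snd q \<and> (fst p = fst q + 1 \<or> fst q = fst p + 1))"

definition grid_path :: "nat \<Rightarrow> nat \<Rightarrow> (nat \<times> nat) list \<Rightarrow> bool" where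
  "grid_path w h ps \<longleftrightarrow> ps \<noteq> [] \<and> distinct ps \<and> (\<forall>p\<in>set ps. grid_point w h p) \<and>
     (\<forall>i. i + 1 < length ps \<longrightarrow> grid_adj (ps ! i) (ps ! (i + 1)))"

definition path_edges :: "(nat \<times> nat) list \<Rightarrow> (nat \<times> nat) set set" where
  "path_edges ps = {{ps ! i, ps ! (i + 1)} | i. i + 1 < length ps}"

definition EPG_rep ::
  "'a set \<Rightarrow> 'a set set \<Rightarrow> nat \<Rightarrow> nat \<Rightarrow> ('a \<Rightarrow> (nat \<times> nat) list) \<Rightarrow> bool" where
  "EPG_rep V E w h P \<longleftrightarrow> (\<forall>v\<in>V. grid_path w h (P v)) \<and>
     (\<forall>u\<in>V. \<forall>v\<in>V. u \<noteq> v \<longrightarrow> ({u, v} \<in> E \<longleftrightarrow> path_edges (P u) \<inter> path_edges (P v) \<noteq> {}))"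

definition edge_load_le :: "'a set \<Rightarrow> ('a \<Rightarrow> (nat \<times> nat) list) \<Rightarrow> nat \<Rightarrow> bool" where
  "edge_load_le V P c \<longleftrightarrow> (\<forall>e. card {v\<in>V. e \<in> path_edges (P v)} \<le> c)"

definition interval_graph_edges :: "'a set \<Rightarrow> ('a \<Rightarrow> real) \<Rightarrow> ('a \<Rightarrow> real) \<Rightarrow> 'a set set" where
  "interval_graph_edges V l r =
     {{u, v} | u v. u \<in> V \<and> v \<in> V \<and> u \<noteq> v \<and> {l u..r u} \<inter> {l v..r v} \<noteq> {}}"

definition colourable :: "'a set \<Rightarrow> 'a set set \<Rightarrow> nat \<Rightarrow> bool" where
  "colourable V E k \<longleftrightarrow> (\<exists>f. (\<forall>v\<in>V. f v < k) \<and> (\<forall>u\<in>V. \<forall>v\<in>V. {u, v} \<in> E \<longrightarrow> u \<noteq> v \<longrightarrow> f u \<noteq> f v))"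

text \<open>It suffices (and is
  equivalent) to consider interval graphs on the vertex set of G, since induced
  subgraphs of interval graphs are interval graphs.\<close>
definition pw_le :: "'a set \<Rightarrow> 'a set set \<Rightarrow> nat \<Rightarrow> bool" where
  "pw_le V E k \<longleftrightarrow> (\<exists>l r. (\<forall>v\<in>V. l v \<le> r v) \<and> E \<subseteq> interval_graph_edges V l r \<and>
      colourable V (interval_graph_edges V l r) (k + 1))"

definition pathwidth :: "'a set \<Rightarrow> 'a set set \<Rightarrow> nat" where
  "pathwidth V E = (LEAST k. pw_le V E k)"

end

theory Submission
  imports Defs
begin

text \<open>Project every vertex-path onto the x-axis: a path with at least one grid-edge becomes the
  interval of columns it visits, and sharing a grid-edge forces these intervals to meet.  A point
  x is covered only by paths that visit column x and hence use one of the at most 3h - 1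
  grid-edges incident to that column, each of which carries at most c paths.  So every point lies
  in at most c(3h - 1) intervals, and the greedy colouring of an interval graph by left endpoints
  uses at most that many colours.\<close>

lemma interval_greedy_colouring:
  fixes l r :: "'a \<Rightarrow> real"
  assumes "finite V" and "\<forall>v\<in>V. l v \<le> r v"
    and "\<forall>v\<in>V. card {u\<in>V. l u \<le> l v \<and> l v \<le> r u} \<le> k"
  shows "\<exists>f. (\<forall>v\<in>V. f v < k) \<and>
    (\<forall>u\<in>V. \<forall>v\<in>V. u \<noteq> v \<longrightarrow> {l u..r u} \<inter> {l v..r v} \<noteq> {} \<longrightarrow> f u \<noteq> (f v :: nat))"
  using assms
proof (induction V rule: finite_ranking_induct[where f = l])
  case empty
  then show ?case by simp
next
  case (insert x S)
  show ?case
  proof (cases "x \<in> S")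
    case True
    with insert show ?thesis by (simp add: insert_absorb)
  next
    case x_new: False
    have "card {u\<in>S. l u \<le> l v \<and> l v \<le> r u} \<le> k" if "v \<in> S" for v
    proof -
      have "card {u\<in>S. l u \<le> l v \<and> l v \<le> r u} \<le> card {u\<in>insert x S. l u \<le> l v \<and> l v \<le> r u}"
        using insert.hyps(1) by (intro card_mono) auto
      with insert.prems(2) that show ?thesis by fastforce
    qed
    with insert obtain f where f_range: "\<forall>v\<in>S. f v < k"
      and f_proper: "\<forall>u\<in>S. \<forall>v\<in>S. u \<noteq> v \<longrightarrow> {l u..r u} \<inter> {l v..r v} \<noteq> {} \<longrightarrow> f u \<noteq> f v"
      by auto
    define N where "N = {y\<in>S. {l y..r y} \<inter> {l x..r x} \<noteq> {}}"
    have "finite N" using insert.hyps(1) by (simp add: N_def)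
    \<comment> \<open>every neighbour of x starts no later than x, so it contains the point l x\<close>
    have "insert x N \<subseteq> {u\<in>insert x S. l u \<le> l x \<and> l x \<le> r u}"
      using insert.hyps(2) insert.prems(1) by (auto simp: N_def)
    then have "card (insert x N) \<le> card {u\<in>insert x S. l u \<le> l x \<and> l x \<le> r u}"
      using insert.hyps(1) by (intro card_mono) auto
    also have "\<dots> \<le> k" using insert.prems(2) by simp
    finally have "card (insert x N) \<le> k" .
    then have "card (f ` N) < card {0..<k}"
      using \<open>finite N\<close> x_new card_image_le[of N f] by (simp add: N_def)
    then have "\<not> {0..<k} \<subseteq> f ` N"
      using \<open>finite N\<close> by (meson card_mono finite_imageI leD)
    then obtain a where a: "a < k" "a \<notin> f ` N" by (auto simp: subset_eq)
    show ?thesis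
    proof (intro exI[of _ "f(x := a)"] conjI ballI impI)
      fix v assume "v \<in> insert x S"
      then show "(f(x := a)) v < k" using f_range a by auto
    next
      fix u v assume "u \<in> insert x S" "v \<in> insert x S" "u \<noteq> v"
        and "{l u..r u} \<inter> {l v..r v} \<noteq> {}"
      then show "(f(x := a)) u \<noteq> (f(x := a)) v"
        using f_proper a by (auto simp: N_def Int_commute)
    qed
  qed
qed

lemma pw_le_interval_model:
  fixes l r :: "'a \<Rightarrow> real"
  assumes "finite V" and "\<forall>v\<in>V. l v \<le> r v" and "E \<subseteq> interval_graph_edges V l r"
    and "\<forall>v\<in>V. card {u\<in>V. l u \<le> l v \<and> l v \<le> r u} \<le> k + 1"
  shows "pw_le V E k"
proof -
  obtain f where "\<forall>v\<in>V. f v < k + 1"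
    and f_proper: "\<forall>u\<in>V. \<forall>v\<in>V. u \<noteq> v \<longrightarrow> {l u..r u} \<inter> {l v..r v} \<noteq> {} \<longrightarrow> f u \<noteq> f v"
    using interval_greedy_colouring[OF assms(1,2,4)] by blast
  moreover have "f u \<noteq> f v"
    if "u \<in> V" "v \<in> V" "{u, v} \<in> interval_graph_edges V l r" "u \<noteq> v" for u v
    using that f_proper unfolding interval_graph_edges_def by (auto simp: doubleton_eq_iff Int_commute)
  ultimately have "colourable V (interval_graph_edges V l r) (k + 1)"
    unfolding colourable_def by blast
  with assms(2,3) show ?thesis unfolding pw_le_def by blast
qed

lemma nat_intermed_int_val_between:
  fixes f :: "nat \<Rightarrow> int"
  assumes "\<forall>i<n. \<bar>f (Suc i) - f i\<bar> \<le> 1" and "a \<le> n" "b \<le> n" and "f a \<le> k" "k \<le> f b"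
  shows "\<exists>i\<le>n. f i = k"
proof (cases "a \<le> b")
  case True
  then obtain i where "a \<le> i" "i \<le> b" "f i = k"
    using nat_intermed_int_val[of a b f k] assms by auto
  with \<open>b \<le> n\<close> show ?thesis using le_trans by blast
next
  case False
  have "\<forall>i. b \<le> i \<and> i < a \<longrightarrow> \<bar>- f (Suc i) - - f i\<bar> \<le> 1"
    using assms(1,2) by (auto simp: abs_minus_commute)
  with False obtain i where "b \<le> i" "i \<le> a" "- f i = - k"
    using nat_intermed_int_val[of b a "\<lambda>i. - f i" "- k"] assms(4,5) by auto
  with \<open>a \<le> n\<close> show ?thesis using le_trans by (metis neg_equal_iff_equal)
qed

text \<open>For x = 1 the left edges reach the non-existent column 0; they only enlarge the set.\<close>
definition column_edges :: "nat \<Rightarrow> nat \<Rightarrow> (nat \<times> nat) set set" where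
  "column_edges x h = (\<lambda>y. {(x, y), (x, y + 1)}) ` {1..<h} \<union> (\<lambda>y. {(x - 1, y), (x, y)}) ` {1..h}
     \<union> (\<lambda>y. {(x, y), (x + 1, y)}) ` {1..h}"

lemma finite_column_edges: "finite (column_edges x h)"
  by (simp add: column_edges_def)

lemma card_column_edges_le: "card (column_edges x h) \<le> 3 * h - 1"
proof -
  let ?vert = "(\<lambda>y. {(x, y), (x, y + 1)}) ` {1..<h}"
    and ?left = "(\<lambda>y. {(x - 1, y), (x, y)}) ` {1..h}"
    and ?right = "(\<lambda>y. {(x, y), (x + 1, y)}) ` {1..h}"
  have "card (column_edges x h) \<le> card (?vert \<union> ?left) + card ?right"
    unfolding column_edges_def by (rule card_Un_le)
  also have "\<dots> \<le> card ?vert + card ?left + card ?right"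
    using card_Un_le[of ?vert ?left] by linarith
  also have "\<dots> \<le> card {1..<h} + card {1..h} + card {1..h}"
    by (intro add_mono card_image_le) auto
  finally show ?thesis by simp
qed

lemma grid_adj_commute: "grid_adj p q \<longleftrightarrow> grid_adj q p"
  by (auto simp: grid_adj_def)

lemma grid_adj_fst_step: "grid_adj p q \<Longrightarrow> \<bar>int (fst q) - int (fst p)\<bar> \<le> 1"
  by (auto simp: grid_adj_def)

lemma grid_edge_in_column_edges:
  assumes "grid_point w h p" "grid_point w h q" "grid_adj p q"
  shows "{p, q} \<in> column_edges (fst p) h"
proof -
  obtain x y a b where p: "p = (x, y)" and q: "q = (a, b)" by fastforce
  have bounds: "1 \<le> y" "y \<le> h" "1 \<le> b" "b \<le> h"
    using assms(1,2) by (auto simp: p q grid_point_def)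
  from assms(3) consider "a = x" "y = b + 1" | "a = x" "b = y + 1"
    | "b = y" "x = a + 1" | "b = y" "a = x + 1"
    by (auto simp: grid_adj_def p q)
  then show ?thesis
  proof cases
    case 1
    then have "{p, q} = {(x, b), (x, b + 1)}" "b \<in> {1..<h}"
      using bounds by (auto simp: p q)
    then show ?thesis unfolding column_edges_def p fst_conv by blast
  next
    case 2
    then have "{p, q} = {(x, y), (x, y + 1)}" "y \<in> {1..<h}"
      using bounds by (auto simp: p q)
    then show ?thesis unfolding column_edges_def p fst_conv by blast
  next
    case 3
    then have "{p, q} = {(x - 1, y), (x, y)}" "y \<in> {1..h}"
      using bounds by (auto simp: p q)
    then show ?thesis unfolding column_edges_def p fst_conv by blast
  next
    case 4
    then have "{p, q} = {(x, y), (x + 1, y)}" "y \<in> {1..h}"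
      using bounds by (auto simp: p q)
    then show ?thesis unfolding column_edges_def p fst_conv by blast
  qed
qed

lemma grid_path_uses_column_edge:
  assumes "grid_path w h ps" and "2 \<le> length ps"
    and "Min (fst ` set ps) \<le> x" "x \<le> Max (fst ` set ps)"
  shows "\<exists>e\<in>column_edges x h. e \<in> path_edges ps"
proof -
  have adj: "\<And>i. i + 1 < length ps \<Longrightarrow> grid_adj (ps ! i) (ps ! (i + 1))"
    and pts: "\<And>p. p \<in> set ps \<Longrightarrow> grid_point w h p"
    using assms(1) by (auto simp: grid_path_def)
  have "Min (fst ` set ps) \<in> fst ` set ps" "Max (fst ` set ps) \<in> fst ` set ps"
    using assms(2) by (auto intro!: Min_in Max_in)
  then have "\<exists>a<length ps. fst (ps ! a) = Min (fst ` set ps)"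
    and "\<exists>b<length ps. fst (ps ! b) = Max (fst ` set ps)"
    by (auto simp: in_set_conv_nth) (metis fst_conv)+
  then obtain a b where "a < length ps" "fst (ps ! a) = Min (fst ` set ps)"
    and "b < length ps" "fst (ps ! b) = Max (fst ` set ps)"
    by blast
  moreover have "\<forall>i<length ps - 1. \<bar>int (fst (ps ! Suc i)) - int (fst (ps ! i))\<bar> \<le> 1"
  proof (intro allI impI)
    fix i assume "i < length ps - 1"
    then show "\<bar>int (fst (ps ! Suc i)) - int (fst (ps ! i))\<bar> \<le> 1"
      using adj grid_adj_fst_step by simp
  qed
  ultimately have "\<exists>j\<le>length ps - 1. int (fst (ps ! j)) = int x"
    using assms(3,4) by (intro nat_intermed_int_val_between[of _ _ a b]) auto
  then obtain j where "j \<le> length ps - 1" and jx: "int (fst (ps ! j)) = int x"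
    by blast
  with assms(2) have j: "j < length ps" "fst (ps ! j) = x"
    by simp_all
  define i where "i = (if j + 1 < length ps then j else j - 1)"
  have i: "i + 1 < length ps" "j = i \<or> j = i + 1"
    using j(1) assms(2) by (auto simp: i_def)
  then have "{ps ! i, ps ! (i + 1)} \<in> path_edges ps"
    by (auto simp: path_edges_def)
  moreover have "{ps ! i, ps ! (i + 1)} \<in> column_edges x h"
  proof -
    have pts_i: "grid_point w h (ps ! i)" "grid_point w h (ps ! (i + 1))"
      using i(1) by (auto intro!: pts)
    have adj_i: "grid_adj (ps ! i) (ps ! (i + 1))" "grid_adj (ps ! (i + 1)) (ps ! i)"
      using adj[OF i(1)] by (auto simp: grid_adj_commute)
    from i(2) show ?thesis
    proof
      assume "j = i"
      with j(2) show ?thesis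
        using grid_edge_in_column_edges[OF pts_i adj_i(1)] by simp
    next
      assume "j = i + 1"
      with j(2) show ?thesis
        using grid_edge_in_column_edges[OF pts_i(2,1) adj_i(2)] by (simp add: insert_commute)
    qed
  qed
  ultimately show ?thesis by blast
qed

lemma card_paths_using_edges_le:
  assumes "finite V" and "edge_load_le V P c" and "finite F"
  shows "card {v\<in>V. \<exists>e\<in>F. e \<in> path_edges (P v)} \<le> card F * c"
proof -
  have "card {v\<in>V. \<exists>e\<in>F. e \<in> path_edges (P v)} = card (\<Union>e\<in>F. {v\<in>V. e \<in> path_edges (P v)})"
    by (rule arg_cong[where f = card]) blast
  also have "\<dots> \<le> (\<Sum>e\<in>F. card {v\<in>V. e \<in> path_edges (P v)})"
    by (rule card_UN_le[OF assms(3)])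
  also have "\<dots> \<le> card F * c"
    using assms(2) sum_bounded_above[of F _ c] by (auto simp: edge_load_le_def)
  finally show ?thesis .
qed

text \<open>A path with a grid-edge is mapped to the interval of the columns it visits, a one-point
  path (an isolated vertex) to the point -(idx v + 1); for injective idx these points meet no
  other interval.\<close>
definition span_left :: "('a \<Rightarrow> nat) \<Rightarrow> ('a \<Rightarrow> (nat \<times> nat) list) \<Rightarrow> 'a \<Rightarrow> real" where
  "span_left idx P v =
     (if 2 \<le> length (P v) then real (Min (fst ` set (P v))) else - real (idx v) - 1)"

definition span_right :: "('a \<Rightarrow> nat) \<Rightarrow> ('a \<Rightarrow> (nat \<times> nat) list) \<Rightarrow> 'a \<Rightarrow> real" where
  "span_right idx P v =
     (if 2 \<le> length (P v) then real (Max (fst ` set (P v))) else - real (idx v) - 1)"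

lemma span_left_le_right: "span_left idx P v \<le> span_right idx P v"
proof (cases "2 \<le> length (P v)")
  case True
  then have "fst ` set (P v) \<noteq> {}" by auto
  with True show ?thesis
    by (simp add: span_left_def span_right_def Min_le Max_in)
qed (simp add: span_left_def span_right_def)

lemma visited_column_in_span:
  assumes "2 \<le> length (P v)" and "p \<in> set (P v)"
  shows "real (fst p) \<in> {span_left idx P v..span_right idx P v}"
  using assms by (simp add: span_left_def span_right_def)

lemma spans_meet_if_common_path_edge:
  assumes "e \<in> path_edges (P u)" and "e \<in> path_edges (P v)"
  shows "{span_left idx P u..span_right idx P u} \<inter> {span_left idx P v..span_right idx P v} \<noteq> {}"
proof -
  obtain i where i: "i + 1 < length (P u)" "e = {P u ! i, P u ! (i + 1)}"
    using assms(1) by (auto simp: path_edges_def)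
  obtain j where j: "j + 1 < length (P v)" "e = {P v ! j, P v ! (j + 1)}"
    using assms(2) by (auto simp: path_edges_def)
  have "e \<subseteq> set (P v)"
    using j by simp
  then have "P u ! i \<in> set (P v)"
    using i(2) by blast
  then have "real (fst (P u ! i)) \<in> {span_left idx P v..span_right idx P v}"
    using j(1) by (intro visited_column_in_span) auto
  moreover have "real (fst (P u ! i)) \<in> {span_left idx P u..span_right idx P u}"
    using i(1) by (intro visited_column_in_span) auto
  ultimately show ?thesis by blast
qed

lemma epg_edges_subset_span_graph:
  assumes "graph V E" and "EPG_rep V E w h P"
  shows "E \<subseteq> interval_graph_edges V (span_left idx P) (span_right idx P)"
proof
  fix e assume "e \<in> E"
  with assms(1) obtain u v where uv: "e = {u, v}" "u \<noteq> v" "u \<in> V" "v \<in> V"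
    by (auto simp: graph_def)
  with \<open>e \<in> E\<close> assms(2) obtain f where "f \<in> path_edges (P u)" "f \<in> path_edges (P v)"
    by (auto simp: EPG_rep_def)
  then have "{span_left idx P u..span_right idx P u} \<inter> {span_left idx P v..span_right idx P v} \<noteq> {}"
    by (rule spans_meet_if_common_path_edge)
  with uv show "e \<in> interval_graph_edges V (span_left idx P) (span_right idx P)"
    unfolding interval_graph_edges_def by blast
qed

lemma card_spans_at_left_end_le:
  assumes "finite V" and "inj_on idx V" and "\<forall>u\<in>V. grid_path w h (P u)"
    and "edge_load_le V P c" and "1 \<le> c" and "v \<in> V"
  shows "card {u\<in>V. span_left idx P u \<le> span_left idx P v \<and> span_left idx P v \<le> span_right idx P u}
    \<le> c * (3 * h - 1)"
    (is "card ?S \<le> _")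
proof (cases "2 \<le> length (P v)")
  case short: False
  have "?S \<subseteq> {v}"
  proof
    fix u assume u: "u \<in> ?S"
    with short have "\<not> 2 \<le> length (P u)"
      by (auto simp: span_left_def)
    with short u have "idx u = idx v"
      by (auto simp: span_left_def span_right_def)
    with u assms(2,6) show "u \<in> {v}"
      by (auto dest: inj_onD)
  qed
  then have "card ?S \<le> 1"
    using card_mono[of "{v}" ?S] by simp
  moreover have "grid_point w h (hd (P v))"
    using assms(3,6) by (simp add: grid_path_def)
  then have "1 \<le> h"
    by (simp add: grid_point_def)
  ultimately show ?thesis
    using assms(5) by (simp add: le_trans one_le_mult_iff)
next
  case long: True
  define x where "x = Min (fst ` set (P v))"
  have "?S \<subseteq> {u\<in>V. \<exists>e\<in>column_edges x h. e \<in> path_edges (P u)}"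
  proof
    fix u assume u: "u \<in> ?S"
    with long have "2 \<le> length (P u)"
      by (auto simp: span_left_def span_right_def split: if_splits)
    with u long have "Min (fst ` set (P u)) \<le> x" "x \<le> Max (fst ` set (P u))"
      by (auto simp: span_left_def span_right_def x_def)
    with u \<open>2 \<le> length (P u)\<close> assms(3) show "u \<in> {u\<in>V. \<exists>e\<in>column_edges x h. e \<in> path_edges (P u)}"
      using grid_path_uses_column_edge by blast
  qed
  then have "card ?S \<le> card {u\<in>V. \<exists>e\<in>column_edges x h. e \<in> path_edges (P u)}"
    using assms(1) by (intro card_mono) auto
  also have "\<dots> \<le> card (column_edges x h) * c"
    using card_paths_using_edges_le[OF assms(1,4) finite_column_edges] .
  also have "\<dots> \<le> c * (3 * h - 1)"
    using card_column_edges_le[of x h] by (simp add: mult.commute)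
  finally show ?thesis .
qed

theorem theorem6:
  fixes V :: "'a set" and E :: "'a set set" and w h c :: nat
    and P :: "'a \<Rightarrow> (nat \<times> nat) list"
  assumes "graph V E"
    and "EPG_rep V E w h P"
    and "edge_load_le V P c"
    and "c \<ge> 1"
  shows "pathwidth V E \<le> c * (3 * h - 1) - 1"
proof -
  have "finite V" using assms(1) by (simp add: graph_def)
  then obtain idx :: "'a \<Rightarrow> nat" where "inj_on idx V"
    using finite_imp_inj_to_nat_seg by blast
  have "pw_le V E (c * (3 * h - 1) - 1)"
  proof (rule pw_le_interval_model)
    show "\<forall>v\<in>V. span_left idx P v \<le> span_right idx P v"
      by (simp add: span_left_le_right)
    show "E \<subseteq> interval_graph_edges V (span_left idx P) (span_right idx P)"
      using assms(1,2) by (rule epg_edges_subset_span_graph)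
    have "\<forall>v\<in>V. grid_path w h (P v)"
      using assms(2) by (simp add: EPG_rep_def)
    then show "\<forall>v\<in>V. card {u\<in>V. span_left idx P u \<le> span_left idx P v
        \<and> span_left idx P v \<le> span_right idx P u} \<le> c * (3 * h - 1) - 1 + 1"
      using card_spans_at_left_end_le[OF \<open>finite V\<close> \<open>inj_on idx V\<close> _ assms(3,4)] by fastforce
  qed fact
  then show ?thesis
    unfolding pathwidth_def by (rule Least_le)
qed

end
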